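(* The function $f(A)=h(A)+c(A)$ on $2^V$ is non-decreasing and $\varepsilon$-approximately $\mathcal{C}$-submodular with $\varepsilon=1/L$, where $\mathcal{C}$ is the collection of all subsets $B\subseteq V$ inducing a connected subgraph; that is, for every $A\subseteq V$, every $B\in\mathcal{C}$ and every $x\in V\setminus B$, $$f(A\cup B\cup\{x\})-f(A\cup B)\le f(A\cup\{x\})-f(A)+\frac1L .$$
   Context: $G=(V,E,w)$ is a finite simple undirected graph with positive rational edge weights and no isolated vertices. $N_A(v)=N(v)\cap A$, $W_A(v)=\sum_{u\in N_A(v)}w_{(v,u)}$, $W(v)=W_V(v)$. $h(A)=\sum_{v\in V}h_A(v)$ with $h_A(v)=W(v)/2$ if $v\in A$ or $W_A(v)\ge W(v)/2$, and $h_A(v)=W_A(v)$ otherwise. $L=\max_v l(v)$, where $l(v)$ is the lcm of the denominators of the reduced fractions $W(v)/2$ and of the weights of edges incident to $v$. $p(A)$ is the number of connected components of the induced subgraph $G[A]$ ($p(\emptyset)=0$), $q(A)$ is the number of connected components of the spanning subgraph $(V,\{e\in E: e \text{ has at least one endpoint in } A\})$, and $c(A)=\frac1L\big(|V|-q(A)-p(A)\big)$. *)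

theory Defs
  imports Complex_Main
begin

text \<open>A finite simple undirected weighted graph: vertex set V, edges E as 2-element subsets
of V, weight function w on edges (only its values on E matter).\<close>

definition wgraph :: "'a set \<Rightarrow> 'a set set \<Rightarrow> ('a set \<Rightarrow> rat) \<Rightarrow> bool" where
  "wgraph V E w \<longleftrightarrow> finite V \<and> (\<forall>e\<in>E. e \<subseteq> V \<and> card e = 2) \<and>
     (\<forall>e\<in>E. w e > 0) \<and> (\<forall>v\<in>V. \<exists>e\<in>E. v \<in> e)"

definition nbr :: "'a set set \<Rightarrow> 'a set \<Rightarrow> 'a \<Rightarrow> 'a set" where
  "nbr E A v = {u \<in> A. {v, u} \<in> E}"

definition WA :: "'a set set \<Rightarrow> ('a set \<Rightarrow> rat) \<Rightarrow> 'a set \<Rightarrow> 'a \<Rightarrow> rat" where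
  "WA E w A v = (\<Sum>u\<in>nbr E A v. w {v, u})"

definition hv :: "'a set \<Rightarrow> 'a set set \<Rightarrow> ('a set \<Rightarrow> rat) \<Rightarrow> 'a set \<Rightarrow> 'a \<Rightarrow> rat" where
  "hv V E w A v = (if v \<in> A \<or> WA E w A v \<ge> WA E w V v / 2 then WA E w V v / 2 else WA E w A v)"

definition hfun :: "'a set \<Rightarrow> 'a set set \<Rightarrow> ('a set \<Rightarrow> rat) \<Rightarrow> 'a set \<Rightarrow> rat" where
  "hfun V E w A = (\<Sum>v\<in>V. hv V E w A v)"

definition denom :: "rat \<Rightarrow> int" where
  "denom q = snd (quotient_of q)"

definition lv :: "'a set \<Rightarrow> 'a set set \<Rightarrow> ('a set \<Rightarrow> rat) \<Rightarrow> 'a \<Rightarrow> int" where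
  "lv V E w v = Lcm ({denom (WA E w V v / 2)} \<union> {denom (w e) | e. e \<in> E \<and> v \<in> e})"

definition Lval :: "'a set \<Rightarrow> 'a set set \<Rightarrow> ('a set \<Rightarrow> rat) \<Rightarrow> int" where
  "Lval V E w = Max (lv V E w ` V)"

text \<open>Number of connected components of the graph with vertex set S and edge set F
(edges of F not contained in S are ignored).\<close>
definition ncomp :: "'a set \<Rightarrow> 'a set set \<Rightarrow> nat" where
  "ncomp S F = card (S // ({(u, v). u \<in> S \<and> v \<in> S \<and> {u, v} \<in> F}\<^sup>*))"

definition pfun :: "'a set set \<Rightarrow> 'a set \<Rightarrow> nat" where
  "pfun E A = ncomp A {e \<in> E. e \<subseteq> A}"

definition qfun :: "'a set \<Rightarrow> 'a set set \<Rightarrow> 'a set \<Rightarrow> nat" where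
  "qfun V E A = ncomp V {e \<in> E. e \<inter> A \<noteq> {}}"

definition cfun :: "'a set \<Rightarrow> 'a set set \<Rightarrow> ('a set \<Rightarrow> rat) \<Rightarrow> 'a set \<Rightarrow> rat" where
  "cfun V E w A = (of_nat (card V) - of_nat (qfun V E A) - of_nat (pfun E A)) / of_int (Lval V E w)"

definition ffun :: "'a set \<Rightarrow> 'a set set \<Rightarrow> ('a set \<Rightarrow> rat) \<Rightarrow> 'a set \<Rightarrow> rat" where
  "ffun V E w A = hfun V E w A + cfun V E w A"

text \<open>B induces a connected subgraph (connected graphs are nonempty).\<close>
definition connected_set :: "'a set set \<Rightarrow> 'a set \<Rightarrow> bool" where
  "connected_set E B \<longleftrightarrow> pfun E B = 1"

end

theory Submission
  imports Defs
begin

text \<open>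
  The function h is a sum over vertices v of terms that equal min (W_A(v), W(v)/2) for v
  not in A and their maximal value W(v)/2 for v in A. Each is a concave nondecreasing
  function of a modular function with nonnegative weights, hence monotone and submodular.

  For c, adding a vertex x to S merges into one component the k components of the
  q-graph of S that meet x or its neighbours, and joins x to the j components of G[S]
  adjacent to x, so that L \<cdot> (c(S + x) - c(S)) = (k - 1) + (j - 1). Always k \<ge> 1, and
  if j = 0 then x is isolated in the q-graph of S while having a neighbour, so k \<ge> 2:
  c is monotone. Enlarging S coarsens the q-graph, so k can only decrease; and when
  B is connected, every component of G[A \<union> B] avoiding B is a component of G[A],
  while at most one component meets B, so j grows by at most one from A to A \<union> B.
\<close>

section \<open>Merging equivalence classes\<close>

lemma equiv_UNIV_rtrancl: "sym R \<Longrightarrow> equiv UNIV (R\<^sup>*)"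
  by (simp add: equivI refl_rtrancl sym_rtrancl trans_rtrancl)

lemma rtrancl_stays_in:
  assumes "R \<subseteq> U \<times> U" "u \<in> U" "(u, v) \<in> R\<^sup>*"
  shows "v \<in> U"
proof -
  have "R\<^sup>* `` U = U" using assms(1) by (intro Image_closed_trancl) auto
  then show ?thesis using assms(2,3) by blast
qed

lemma quotient_rtrancl_subset: "R \<subseteq> U \<times> U \<Longrightarrow> X \<in> U // R\<^sup>* \<Longrightarrow> X \<subseteq> U"
  by (auto elim!: quotientE intro: rtrancl_stays_in)

lemma finite_quotient_of_finite: "finite U \<Longrightarrow> finite (U // R)"
  unfolding quotient_def by simp

definition classes_meeting :: "'a set \<Rightarrow> ('a \<times> 'a) set \<Rightarrow> 'a set \<Rightarrow> 'a set set" where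
  "classes_meeting U R Z = {C \<in> U // R\<^sup>*. C \<inter> Z \<noteq> {}}"

lemma finite_classes_meeting: "finite U \<Longrightarrow> finite (classes_meeting U R Z)"
  unfolding classes_meeting_def by (simp add: finite_quotient_of_finite)

definition spokes :: "'a \<Rightarrow> 'a set \<Rightarrow> ('a \<times> 'a) set" where
  "spokes x Y = {x} \<times> Y \<union> Y \<times> {x}"

lemma rtrancl_Un_spokes:
  fixes x :: 'a and Y :: "'a set"
  assumes "sym R"
  defines "M \<equiv> R\<^sup>* `` insert x Y"
  shows "(R \<union> spokes x Y)\<^sup>* = R\<^sup>* \<union> M \<times> M"
proof -
  let ?S = "(R \<union> spokes x Y)\<^sup>*"
  have R_sym: "(a, b) \<in> R\<^sup>* \<Longrightarrow> (b, a) \<in> R\<^sup>*" for a b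
    using assms(1) by (meson symD sym_rtrancl)
  have trans: "trans (R\<^sup>* \<union> M \<times> M)"
    unfolding M_def by (rule transI) (auto intro: rtrancl_trans dest: R_sym)
  have step: "R \<union> spokes x Y \<subseteq> R\<^sup>* \<union> M \<times> M"
    unfolding M_def spokes_def by auto
  have "?S \<subseteq> R\<^sup>* \<union> M \<times> M"
  proof (rule subrelI)
    fix a b assume "(a, b) \<in> ?S"
    then show "(a, b) \<in> R\<^sup>* \<union> M \<times> M"
      by (induction rule: rtrancl_induct) (use trans step in \<open>auto dest: transD\<close>)
  qed
  moreover have R_S: "R\<^sup>* \<subseteq> ?S" by (simp add: rtrancl_mono)
  moreover have "(a, b) \<in> ?S" if "a \<in> M" "b \<in> M" for a b
  proof -
    obtain z1 where z1: "z1 \<in> insert x Y" "(z1, a) \<in> R\<^sup>*" using \<open>a \<in> M\<close> M_def by blast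
    obtain z2 where z2: "z2 \<in> insert x Y" "(z2, b) \<in> R\<^sup>*" using \<open>b \<in> M\<close> M_def by blast
    have "(a, z1) \<in> ?S" using R_S R_sym[OF z1(2)] by blast
    moreover have "(z1, x) \<in> ?S" "(x, z2) \<in> ?S"
      using z1(1) z2(1) unfolding spokes_def by auto
    moreover have "(z2, b) \<in> ?S" using R_S z2(2) by blast
    ultimately show ?thesis by (meson rtrancl_trans)
  qed
  ultimately show ?thesis by auto
qed

lemma card_quotient_merge_classes:
  assumes e: "equiv UNIV e" and U: "finite U" "Z \<subseteq> U" "Z \<noteq> {}"
  shows "card (U // (e \<union> e `` Z \<times> e `` Z)) + card {C \<in> U // e. C \<inter> Z \<noteq> {}}
           = card (U // e) + 1"
proof -
  define M where "M = e `` Z"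
  define e' where "e' = e \<union> M \<times> M"
  have e_sym: "(a, b) \<in> e \<Longrightarrow> (b, a) \<in> e" for a b
    using e by (meson equivE symD)
  have e_trans: "(a, b) \<in> e \<Longrightarrow> (b, c) \<in> e \<Longrightarrow> (a, c) \<in> e" for a b c
    using e by (meson equivE transD)
  have Z_M: "Z \<subseteq> M"
    unfolding M_def using e by (auto simp: equiv_def refl_on_def)
  have class_in_M: "e' `` {u} = M" if "u \<in> M" for u
    using that unfolding e'_def M_def by (auto intro: e_trans dest: e_sym)
  have class_outside_M: "e' `` {u} = e `` {u}" "e `` {u} \<inter> Z = {}" if "u \<notin> M" for u
    using that unfolding e'_def M_def by (auto dest: e_sym)
  have M_class: "M \<in> U // e'"
    using class_in_M U Z_M by (metis all_not_in_conv quotientI subset_iff)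
  have quot': "U // e' = insert M {C \<in> U // e. C \<inter> Z = {}}"
  proof (intro equalityI subsetI)
    fix C assume "C \<in> U // e'"
    then obtain u where "u \<in> U" "C = e' `` {u}" by (auto elim: quotientE)
    then show "C \<in> insert M {C \<in> U // e. C \<inter> Z = {}}"
      using class_in_M class_outside_M by (cases "u \<in> M") (auto intro: quotientI)
  next
    fix C assume "C \<in> insert M {C \<in> U // e. C \<inter> Z = {}}"
    moreover have "e `` {u} \<in> U // e'" if "u \<in> U" "e `` {u} \<inter> Z = {}" for u
    proof -
      have "u \<notin> M" using that e Z_M unfolding M_def by (auto dest: e_sym)
      then show ?thesis using that class_outside_M by (metis quotientI)
    qed
    ultimately show "C \<in> U // e'" using M_class by (auto elim: quotientE)
  qed
  have fin: "finite (U // e)" using U(1) by (rule finite_quotient_of_finite)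
  have "M \<notin> {C \<in> U // e. C \<inter> Z = {}}" using Z_M U by auto
  then have "card (U // e') = card {C \<in> U // e. C \<inter> Z = {}} + 1"
    unfolding quot' using fin by simp
  moreover have "card (U // e) = card {C \<in> U // e. C \<inter> Z = {}} + card {C \<in> U // e. C \<inter> Z \<noteq> {}}"
    using fin by (subst card_Un_disjoint[symmetric]) (auto intro: arg_cong[where f = card])
  ultimately show ?thesis unfolding e'_def M_def by simp
qed

lemma card_quotient_add_spokes:
  assumes "finite U" "sym R" "x \<in> U" "Y \<subseteq> U"
  shows "card (U // (R \<union> spokes x Y)\<^sup>*) + card (classes_meeting U R (insert x Y))
           = card (U // R\<^sup>*) + 1"
  using card_quotient_merge_classes[OF equiv_UNIV_rtrancl[OF assms(2)] assms(1), of "insert x Y"]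
    assms rtrancl_Un_spokes[OF assms(2)]
  by (simp add: classes_meeting_def)

lemma card_classes_meeting_antimono:
  assumes "R \<subseteq> R'" "sym R" "sym R'" "Z \<subseteq> U" "finite U"
  shows "card (classes_meeting U R' Z) \<le> card (classes_meeting U R Z)"
proof -
  have eq: "equiv UNIV (R\<^sup>*)" "equiv UNIV (R'\<^sup>*)"
    using assms(2,3) by (simp_all add: equiv_UNIV_rtrancl)
  have "classes_meeting U R' Z \<subseteq> (\<lambda>C. R'\<^sup>* `` C) ` classes_meeting U R Z"
  proof
    fix C assume "C \<in> classes_meeting U R' Z"
    then obtain u z where u: "u \<in> U" "C = R'\<^sup>* `` {u}" and z: "z \<in> Z" "z \<in> C"
      unfolding classes_meeting_def by (auto elim!: quotientE)
    have "C = R'\<^sup>* `` {z}"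
      using u z eq(2) by (metis Image_singleton_iff equiv_class_eq)
    also have "\<dots> = R'\<^sup>* `` (R\<^sup>* `` {z})"
      using refines_equiv_class_eq2[OF rtrancl_mono[OF assms(1)] eq] by simp
    finally show "C \<in> (\<lambda>C. R'\<^sup>* `` C) ` classes_meeting U R Z"
      using z assms(4) unfolding classes_meeting_def by (auto intro: quotientI)
  qed
  then show ?thesis
    using assms(5) by (meson card_image_le card_mono finite_classes_meeting finite_imageI order_trans)
qed

section \<open>Components after adding a vertex\<close>

definition edge_rel :: "'a set \<Rightarrow> 'a set set \<Rightarrow> ('a \<times> 'a) set" where
  "edge_rel U F = {(u, v). u \<in> U \<and> v \<in> U \<and> {u, v} \<in> F}"

lemma ncomp_eq_card_quotient: "ncomp U F = card (U // (edge_rel U F)\<^sup>*)"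
  by (simp add: ncomp_def edge_rel_def)

lemma sym_edge_rel: "sym (edge_rel U F)"
  unfolding edge_rel_def sym_def by (auto simp: insert_commute)

lemma edge_rel_subset: "edge_rel U F \<subseteq> U \<times> U"
  unfolding edge_rel_def by auto

lemma nbr_subset: "nbr E S x \<subseteq> S"
  by (auto simp: nbr_def)

definition q_rel :: "'a set \<Rightarrow> 'a set set \<Rightarrow> 'a set \<Rightarrow> ('a \<times> 'a) set" where
  "q_rel V E S = edge_rel V {e \<in> E. e \<inter> S \<noteq> {}}"

definition p_rel :: "'a set set \<Rightarrow> 'a set \<Rightarrow> ('a \<times> 'a) set" where
  "p_rel E S = edge_rel S {e \<in> E. e \<subseteq> S}"

definition q_joined :: "'a set \<Rightarrow> 'a set set \<Rightarrow> 'a set \<Rightarrow> 'a \<Rightarrow> nat" where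
  "q_joined V E S x = card (classes_meeting V (q_rel V E S) (insert x (nbr E V x)))"

definition p_joined :: "'a set set \<Rightarrow> 'a set \<Rightarrow> 'a \<Rightarrow> nat" where
  "p_joined E S x = card (classes_meeting S (p_rel E S) (nbr E S x))"

lemma qfun_eq_card_quotient: "qfun V E S = card (V // (q_rel V E S)\<^sup>*)"
  by (simp add: qfun_def q_rel_def ncomp_eq_card_quotient)

lemma pfun_eq_card_quotient: "pfun E S = card (S // (p_rel E S)\<^sup>*)"
  by (simp add: pfun_def p_rel_def ncomp_eq_card_quotient)

lemma sym_q_rel: "sym (q_rel V E S)"
  by (simp add: q_rel_def sym_edge_rel)

lemma sym_p_rel: "sym (p_rel E S)"
  by (simp add: p_rel_def sym_edge_rel)

lemma p_rel_subset: "p_rel E S \<subseteq> S \<times> S"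
  unfolding p_rel_def by (rule edge_rel_subset)

lemma q_rel_insert: "x \<in> V \<Longrightarrow> q_rel V E (insert x S) = q_rel V E S \<union> spokes x (nbr E V x)"
  unfolding q_rel_def edge_rel_def spokes_def nbr_def by (auto simp: insert_commute)

lemma p_rel_mono: "S \<subseteq> T \<Longrightarrow> p_rel E S \<subseteq> p_rel E T"
  unfolding p_rel_def edge_rel_def by auto

lemma qfun_insert:
  assumes "finite V" "x \<in> V"
  shows "qfun V E (insert x S) + q_joined V E S x = qfun V E S + 1"
proof -
  have "card (V // (q_rel V E S \<union> spokes x (nbr E V x))\<^sup>*) + q_joined V E S x
      = card (V // (q_rel V E S)\<^sup>*) + 1"
    unfolding q_joined_def using assms nbr_subset[of E V x] sym_q_rel
    by (intro card_quotient_add_spokes)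
  then show ?thesis by (simp only: qfun_eq_card_quotient q_rel_insert[OF assms(2)])
qed

lemma q_joined_antimono:
  assumes "finite V" "S \<subseteq> T" "x \<in> V"
  shows "q_joined V E T x \<le> q_joined V E S x"
  unfolding q_joined_def
proof (rule card_classes_meeting_antimono)
  show "q_rel V E S \<subseteq> q_rel V E T"
    using assms(2) unfolding q_rel_def edge_rel_def by auto
  show "insert x (nbr E V x) \<subseteq> V"
    using assms(3) nbr_subset by fast
qed (use assms(1) sym_q_rel in auto)

lemma class_in_subset_is_class:
  assumes "A \<subseteq> T" "C \<in> T // (p_rel E T)\<^sup>*" "C \<subseteq> A"
  shows "C \<in> A // (p_rel E A)\<^sup>*"
proof -
  obtain u where u: "u \<in> T" "C = (p_rel E T)\<^sup>* `` {u}"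
    using assms(2) by (auto elim: quotientE)
  have "(u, v) \<in> (p_rel E A)\<^sup>*" if "(u, v) \<in> (p_rel E T)\<^sup>*" for v
    using that
  proof (induction rule: rtrancl_induct)
    case (step y z)
    then have "y \<in> C" "z \<in> C" using u by auto
    then have "y \<in> A" "z \<in> A" using assms(3) by auto
    then show ?case using step unfolding p_rel_def edge_rel_def by (auto intro: rtrancl_into_rtrancl)
  qed simp
  then have "C = (p_rel E A)\<^sup>* `` {u}"
    using u rtrancl_mono[OF p_rel_mono[OF assms(1)]] by blast
  moreover have "u \<in> A" using u assms(3) by blast
  ultimately show ?thesis by (auto intro: quotientI)
qed

lemma card_classes_meeting_connected:
  assumes "pfun E B = 1" "B \<subseteq> T" "finite T"
  shows "card (classes_meeting T (p_rel E T) B) \<le> 1"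
proof -
  let ?RB = "(p_rel E B)\<^sup>*" and ?RT = "(p_rel E T)\<^sup>*"
  have eqB: "equiv UNIV ?RB" and eqT: "equiv UNIV ?RT"
    by (simp_all add: equiv_UNIV_rtrancl sym_p_rel)
  have B_related: "(b1, b2) \<in> ?RT" if "b1 \<in> B" "b2 \<in> B" for b1 b2
  proof -
    obtain C0 where "B // ?RB = {C0}"
      using assms(1) unfolding pfun_eq_card_quotient by (rule card_1_singletonE)
    then have "?RB `` {b1} = ?RB `` {b2}" using that by (metis quotientI singletonD)
    then have "(b1, b2) \<in> ?RB" using eqB by (simp add: equiv_class_eq_iff)
    then show ?thesis using rtrancl_mono[OF p_rel_mono[OF assms(2)]] by blast
  qed
  have meeting_class: "C = ?RT `` {b}" if "C \<in> classes_meeting T (p_rel E T) B" "b \<in> C" for C b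
  proof -
    have "C \<in> T // ?RT" using that(1) unfolding classes_meeting_def by simp
    then obtain u where "C = ?RT `` {u}" by (rule quotientE)
    then show ?thesis using that(2) equiv_class_eq[OF eqT, of u b] by simp
  qed
  have "C1 = C2"
    if C1: "C1 \<in> classes_meeting T (p_rel E T) B" and C2: "C2 \<in> classes_meeting T (p_rel E T) B"
    for C1 C2
  proof -
    obtain b1 b2 where b: "b1 \<in> C1" "b1 \<in> B" "b2 \<in> C2" "b2 \<in> B"
      using C1 C2 unfolding classes_meeting_def by blast
    have "C1 = ?RT `` {b1}" using meeting_class[OF C1 b(1)] .
    also have "\<dots> = ?RT `` {b2}" using equiv_class_eq[OF eqT B_related[OF b(2,4)]] .
    also have "\<dots> = C2" using meeting_class[OF C2 b(3)] by simp
    finally show ?thesis .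
  qed
  then show ?thesis
    using finite_classes_meeting[OF assms(3)] by (simp add: card_le_Suc0_iff_eq)
qed

lemma p_joined_Un_connected_le:
  assumes "finite (A \<union> B)" "pfun E B = 1"
  shows "p_joined E (A \<union> B) x \<le> p_joined E A x + 1"
proof -
  let ?T = "A \<union> B"
  let ?P = "classes_meeting ?T (p_rel E ?T) (nbr E ?T x)"
  let ?PB = "classes_meeting ?T (p_rel E ?T) B"
  let ?PA = "classes_meeting A (p_rel E A) (nbr E A x)"
  have "?P - ?PB \<subseteq> ?PA"
  proof
    fix C assume C: "C \<in> ?P - ?PB"
    then have "C \<subseteq> A"
      using quotient_rtrancl_subset[OF p_rel_subset] unfolding classes_meeting_def by blast
    then show "C \<in> ?PA"
      using C class_in_subset_is_class[of A ?T C E] unfolding classes_meeting_def nbr_def by auto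
  qed
  then have "card (?P - ?PB) \<le> card ?PA"
    using assms(1) by (intro card_mono finite_classes_meeting) auto
  moreover have "card ?P \<le> card (?PB \<union> (?P - ?PB))"
    using assms(1) by (intro card_mono) (auto intro: finite_classes_meeting)
  moreover have "card (?PB \<union> (?P - ?PB)) \<le> card ?PB + card (?P - ?PB)"
    by (rule card_Un_le)
  moreover have "card ?PB \<le> 1"
    using assms by (intro card_classes_meeting_connected) auto
  ultimately show ?thesis unfolding p_joined_def by linarith
qed

locale simple_graph =
  fixes V :: "'a set" and E :: "'a set set"
  assumes finite_vertices: "finite V"
    and edge_subset: "e \<in> E \<Longrightarrow> e \<subseteq> V"
    and edge_card: "e \<in> E \<Longrightarrow> card e = 2"
begin

lemma no_loop: "{x} \<notin> E"
  using edge_card[of "{x}"] by auto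

lemma finite_subset_vertices: "S \<subseteq> V \<Longrightarrow> finite S"
  using finite_vertices finite_subset by blast

lemma p_rel_insert: "p_rel E (insert x S) = p_rel E S \<union> spokes x (nbr E S x)"
  unfolding p_rel_def edge_rel_def spokes_def nbr_def using no_loop by (auto simp: insert_commute)

lemma pfun_insert:
  assumes "x \<notin> S" "S \<subseteq> V"
  shows "pfun E (insert x S) + p_joined E S x = pfun E S + 1"
proof -
  let ?R = "p_rel E S" and ?Y = "nbr E S x"
  have fin: "finite S" using assms(2) by (rule finite_subset_vertices)
  have R_S: "?R \<subseteq> S \<times> S" by (rule p_rel_subset)
  have "x \<notin> Domain ?R" using R_S assms(1) by auto
  then have x_class: "?R\<^sup>* `` {x} = {x}" by (auto simp: Not_Domain_rtrancl)
  have x_new: "{x} \<notin> S // ?R\<^sup>*"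
    using assms(1) quotient_rtrancl_subset[OF R_S] by blast
  have quot: "insert x S // ?R\<^sup>* = insert {x} (S // ?R\<^sup>*)"
    using x_class by (simp add: quotient_def)
  have "classes_meeting (insert x S) ?R (insert x ?Y) = insert {x} (classes_meeting S ?R ?Y)"
    unfolding classes_meeting_def quot using quotient_rtrancl_subset[OF R_S] assms(1) by auto
  then have "card (classes_meeting (insert x S) ?R (insert x ?Y)) = p_joined E S x + 1"
    using x_new fin by (simp add: p_joined_def classes_meeting_def finite_quotient_of_finite)
  moreover have "card (insert x S // ?R\<^sup>*) = pfun E S + 1"
    using x_new fin by (simp add: quot pfun_eq_card_quotient finite_quotient_of_finite)
  moreover have "card (insert x S // (?R \<union> spokes x ?Y)\<^sup>*)
      + card (classes_meeting (insert x S) ?R (insert x ?Y)) = card (insert x S // ?R\<^sup>*) + 1"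
    using fin nbr_subset[of E S x] sym_p_rel by (intro card_quotient_add_spokes) auto
  ultimately show ?thesis
    by (simp add: pfun_eq_card_quotient p_rel_insert)
qed

lemma q_joined_pos:
  assumes "x \<in> V"
  shows "1 \<le> q_joined V E S x"
proof -
  have "(q_rel V E S)\<^sup>* `` {x} \<in> classes_meeting V (q_rel V E S) (insert x (nbr E V x))"
    using assms unfolding classes_meeting_def by (auto intro: quotientI)
  then show ?thesis
    unfolding q_joined_def using finite_classes_meeting[OF finite_vertices]
    by (simp add: Suc_le_eq card_gt_0_iff) blast
qed

lemma p_joined_eq_0_iff:
  assumes "S \<subseteq> V"
  shows "p_joined E S x = 0 \<longleftrightarrow> nbr E S x = {}"
proof -
  have "classes_meeting S (p_rel E S) (nbr E S x) = {} \<longleftrightarrow> nbr E S x = {}"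
  proof
    assume none: "classes_meeting S (p_rel E S) (nbr E S x) = {}"
    show "nbr E S x = {}"
    proof (rule ccontr)
      assume "nbr E S x \<noteq> {}"
      then obtain y where "y \<in> nbr E S x" by blast
      then have "(p_rel E S)\<^sup>* `` {y} \<in> classes_meeting S (p_rel E S) (nbr E S x)"
        using nbr_subset[of E S x] unfolding classes_meeting_def by (auto intro: quotientI)
      with none show False by simp
    qed
  qed (simp add: classes_meeting_def)
  then show ?thesis
    unfolding p_joined_def
    using finite_classes_meeting[OF finite_subset_vertices[OF assms]] by (simp add: card_eq_0_iff)
qed

lemma q_joined_ge_2:
  assumes "x \<in> V" "x \<notin> S" "nbr E S x = {}" "e \<in> E" "x \<in> e"
  shows "2 \<le> q_joined V E S x"
proof -
  let ?R = "q_rel V E S"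
  have "x \<notin> Domain ?R"
    using assms(2,3) unfolding q_rel_def edge_rel_def nbr_def by (auto simp: insert_commute)
  then have x_class: "?R\<^sup>* `` {x} = {x}" by (auto simp: Not_Domain_rtrancl)
  obtain a b where "e = {a, b}" "a \<noteq> b" using edge_card[OF assms(4)] by (meson card_2_iff)
  then obtain y where y: "e = {x, y}" "y \<noteq> x" using assms(5) by auto
  have "y \<in> nbr E V x" using y assms(4) edge_subset unfolding nbr_def by auto
  moreover have "y \<in> V" using y assms(4) edge_subset by auto
  ultimately have "{?R\<^sup>* `` {x}, ?R\<^sup>* `` {y}} \<subseteq> classes_meeting V ?R (insert x (nbr E V x))"
    using assms(1) unfolding classes_meeting_def by (auto intro: quotientI)
  then have "card {?R\<^sup>* `` {x}, ?R\<^sup>* `` {y}} \<le> q_joined V E S x"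
    unfolding q_joined_def using finite_classes_meeting[OF finite_vertices] by (rule card_mono[rotated])
  moreover have "?R\<^sup>* `` {x} \<noteq> ?R\<^sup>* `` {y}" using x_class y(2) by auto
  ultimately show ?thesis by simp
qed

end

section \<open>The function c\<close>

definition cnum :: "'a set \<Rightarrow> 'a set set \<Rightarrow> 'a set \<Rightarrow> int" where
  "cnum V E A = int (card V) - int (qfun V E A) - int (pfun E A)"

lemma cfun_eq_cnum: "cfun V E w A = of_int (cnum V E A) / of_int (Lval V E w)"
  by (simp add: cfun_def cnum_def)

context simple_graph
begin

lemma cnum_insert:
  assumes "x \<in> V" "x \<notin> S" "S \<subseteq> V"
  shows "cnum V E (insert x S) - cnum V E S
           = (int (q_joined V E S x) - 1) + (int (p_joined E S x) - 1)"
  using qfun_insert[OF finite_vertices assms(1), of E S] pfun_insert[OF assms(2,3)]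
  unfolding cnum_def by linarith

lemma cnum_mono_insert:
  assumes "x \<in> V" "S \<subseteq> V" "\<exists>e\<in>E. x \<in> e"
  shows "cnum V E S \<le> cnum V E (insert x S)"
proof (cases "x \<in> S")
  case True
  then show ?thesis by (simp add: insert_absorb)
next
  case False
  have "1 \<le> q_joined V E S x" using assms(1) by (rule q_joined_pos)
  moreover have "2 \<le> q_joined V E S x" if "p_joined E S x = 0"
    using that assms False q_joined_ge_2 p_joined_eq_0_iff by blast
  ultimately show ?thesis
    using cnum_insert[OF assms(1) False assms(2)] by (cases "p_joined E S x = 0") auto
qed

lemma cnum_approx_submodular:
  assumes "A \<subseteq> V" "B \<subseteq> V" "pfun E B = 1" "x \<in> V" "x \<notin> A \<union> B"
  shows "cnum V E (insert x (A \<union> B)) - cnum V E (A \<union> B)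
           \<le> cnum V E (insert x A) - cnum V E A + 1"
proof -
  have "q_joined V E (A \<union> B) x \<le> q_joined V E A x"
    using q_joined_antimono[OF finite_vertices _ assms(4)] by blast
  moreover have "p_joined E (A \<union> B) x \<le> p_joined E A x + 1"
    using finite_subset_vertices assms(1-3) by (intro p_joined_Un_connected_le) auto
  moreover have "cnum V E (insert x (A \<union> B)) - cnum V E (A \<union> B)
      = (int (q_joined V E (A \<union> B) x) - 1) + (int (p_joined E (A \<union> B) x) - 1)"
    using assms(1,2,4,5) by (intro cnum_insert) auto
  moreover have "cnum V E (insert x A) - cnum V E A
      = (int (q_joined V E A x) - 1) + (int (p_joined E A x) - 1)"
    using assms(1,4,5) by (intro cnum_insert) auto
  ultimately show ?thesis by linarith
qed

end

section \<open>The function h\<close>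

lemma nbr_insert:
  "nbr E (insert x X) v = (if {v, x} \<in> E then insert x (nbr E X v) else nbr E X v)"
  unfolding nbr_def by auto

lemma WA_insert:
  assumes "finite X" "x \<notin> X"
  shows "WA E w (insert x X) v = WA E w X v + (if {v, x} \<in> E then w {v, x} else 0)"
proof -
  have "finite (nbr E X v)" by (rule finite_subset[OF nbr_subset assms(1)])
  moreover have "x \<notin> nbr E X v" using assms(2) unfolding nbr_def by simp
  ultimately show ?thesis unfolding WA_def nbr_insert by (simp add: add.commute)
qed

lemma WA_mono:
  assumes "finite T" "S \<subseteq> T" "\<And>e. e \<in> E \<Longrightarrow> 0 \<le> w e"
  shows "WA E w S v \<le> WA E w T v"
  unfolding WA_def
proof (rule sum_mono2)
  show "finite (nbr E T v)" by (rule finite_subset[OF nbr_subset assms(1)])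
  show "nbr E S v \<subseteq> nbr E T v" using assms(2) unfolding nbr_def by auto
qed (use assms(3) in \<open>auto simp: nbr_def\<close>)

lemma hv_eq_min:
  "hv V E w A v = (if v \<in> A then WA E w V v / 2 else min (WA E w A v) (WA E w V v / 2))"
  unfolding hv_def by auto

lemma hv_mono:
  assumes "finite T" "S \<subseteq> T" "\<And>e. e \<in> E \<Longrightarrow> 0 \<le> w e"
  shows "hv V E w S v \<le> hv V E w T v"
proof -
  have "WA E w S v \<le> WA E w T v" using assms by (rule WA_mono)
  then show ?thesis using assms(2) unfolding hv_eq_min by auto
qed

lemma min_add_diff_antimono:
  fixes a b c d :: "'a::linordered_field"
  assumes "0 \<le> d" "a \<le> b"
  shows "min (b + d) c - min b c \<le> min (a + d) c - min a c"
  using assms unfolding min_def by (simp split: if_split; linarith)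

lemma hv_submodular:
  assumes "finite T" "S \<subseteq> T" "x \<notin> T" and w: "\<And>e. e \<in> E \<Longrightarrow> 0 \<le> w e"
  shows "hv V E w (insert x T) v - hv V E w T v \<le> hv V E w (insert x S) v - hv V E w S v"
proof -
  have fin_S: "finite S" using assms(1,2) finite_subset by blast
  have le: "WA E w S v \<le> WA E w T v" using assms(1,2) w by (rule WA_mono)
  consider "v = x" | "v \<noteq> x" "v \<in> T" | "v \<noteq> x" "v \<notin> T" by blast
  then show ?thesis
  proof cases
    case 1
    then have "v \<notin> S" "v \<notin> T" using assms(2,3) by auto
    moreover have "min (WA E w S v) (WA E w V v / 2) \<le> min (WA E w T v) (WA E w V v / 2)"
      using le by (rule min.mono) simp
    ultimately show ?thesis using 1 unfolding hv_eq_min by simp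
  next
    case 2
    have "hv V E w S v \<le> hv V E w (insert x S) v"
      using fin_S w by (intro hv_mono) auto
    then show ?thesis using 2 unfolding hv_eq_min by simp
  next
    case 3
    then have "v \<notin> S" "x \<notin> S" using assms(2,3) by auto
    define d where "d = (if {v, x} \<in> E then w {v, x} else 0)"
    have "0 \<le> d" unfolding d_def using w by simp
    have "WA E w (insert x T) v = WA E w T v + d"
      unfolding d_def using assms(1,3) by (rule WA_insert)
    then have T: "hv V E w (insert x T) v = min (WA E w T v + d) (WA E w V v / 2)"
      "hv V E w T v = min (WA E w T v) (WA E w V v / 2)"
      using 3 by (simp_all add: hv_eq_min)
    have "WA E w (insert x S) v = WA E w S v + d"
      unfolding d_def using fin_S \<open>x \<notin> S\<close> by (rule WA_insert)
    then have S: "hv V E w (insert x S) v = min (WA E w S v + d) (WA E w V v / 2)"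
      "hv V E w S v = min (WA E w S v) (WA E w V v / 2)"
      using 3 \<open>v \<notin> S\<close> by (simp_all add: hv_eq_min)
    show ?thesis
      unfolding T S using \<open>0 \<le> d\<close> le by (rule min_add_diff_antimono)
  qed
qed

lemma hfun_mono:
  assumes "finite V" "S \<subseteq> T" "T \<subseteq> V" "\<And>e. e \<in> E \<Longrightarrow> 0 \<le> w e"
  shows "hfun V E w S \<le> hfun V E w T"
proof -
  have "finite T" using assms(1,3) finite_subset by blast
  then show ?thesis unfolding hfun_def using assms(2,4) by (intro sum_mono hv_mono)
qed

lemma hfun_submodular:
  assumes "finite V" "S \<subseteq> T" "T \<subseteq> V" "x \<notin> T" "\<And>e. e \<in> E \<Longrightarrow> 0 \<le> w e"
  shows "hfun V E w (insert x T) - hfun V E w T \<le> hfun V E w (insert x S) - hfun V E w S"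
proof -
  have "finite T" using assms(1,3) finite_subset by blast
  then show ?thesis
    unfolding hfun_def sum_subtractf[symmetric] using assms(2,4,5) by (intro sum_mono hv_submodular)
qed

lemma wgraph_imp_simple_graph: "wgraph V E w \<Longrightarrow> simple_graph V E"
  unfolding wgraph_def by unfold_locales auto

lemma Lval_nonneg:
  assumes "finite V" "v \<in> V"
  shows "0 \<le> Lval V E w"
proof -
  have "0 \<le> lv V E w v" unfolding lv_def by simp
  also have "lv V E w v \<le> Lval V E w" unfolding Lval_def using assms by simp
  finally show ?thesis .
qed

lemma mono_on_subsets_if_mono_insert:
  fixes f :: "'a set \<Rightarrow> 'b::preorder"
  assumes "finite V" "\<And>S x. S \<subseteq> V \<Longrightarrow> x \<in> V \<Longrightarrow> f S \<le> f (insert x S)"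
    and "A \<subseteq> B" "B \<subseteq> V"
  shows "f A \<le> f B"
proof -
  have "f A \<le> f (A \<union> D)" if "finite D" "D \<subseteq> V" for D
    using that
  proof (induction rule: finite_subset_induct')
    case (insert a D)
    have "f (A \<union> D) \<le> f (insert a (A \<union> D))"
      using assms(3,4) insert.hyps(2,3) by (intro assms(2)) auto
    then show ?case using insert.IH by (auto intro: order_trans)
  qed simp
  moreover have "finite (B - A)" using assms(1,4) finite_subset by blast
  ultimately show ?thesis using assms(3,4) by (metis Diff_subset Un_Diff_cancel subset_Un_eq dual_order.trans)
qed

lemma ffun_mono_insert:
  assumes G: "wgraph V E w" and "S \<subseteq> V" "x \<in> V"
  shows "ffun V E w S \<le> ffun V E w (insert x S)"
proof -
  interpret simple_graph V E using G by (rule wgraph_imp_simple_graph)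
  have w: "\<And>e. e \<in> E \<Longrightarrow> 0 \<le> w e" and x_edge: "\<exists>e\<in>E. x \<in> e"
    using G assms(3) unfolding wgraph_def by (auto intro: less_imp_le)
  have "hfun V E w S \<le> hfun V E w (insert x S)"
    using finite_vertices assms(2,3) w by (intro hfun_mono) auto
  moreover have "cfun V E w S \<le> cfun V E w (insert x S)"
    unfolding cfun_eq_cnum
    using cnum_mono_insert[OF assms(3,2) x_edge] Lval_nonneg[OF finite_vertices assms(3)]
    by (intro divide_right_mono) auto
  ultimately show ?thesis unfolding ffun_def by simp
qed

lemma ffun_mono:
  assumes "wgraph V E w" "A \<subseteq> B" "B \<subseteq> V"
  shows "ffun V E w A \<le> ffun V E w B"
  using assms(1) unfolding wgraph_def
  by (intro mono_on_subsets_if_mono_insert[OF _ ffun_mono_insert[OF assms(1)] assms(2,3)]) auto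

lemma ffun_approx_submodular:
  assumes G: "wgraph V E w" and "A \<subseteq> V" "B \<subseteq> V" "connected_set E B" "x \<in> V" "x \<notin> A \<union> B"
  shows "ffun V E w (insert x (A \<union> B)) - ffun V E w (A \<union> B)
           \<le> ffun V E w (insert x A) - ffun V E w A + 1 / of_int (Lval V E w)"
proof -
  interpret simple_graph V E using G by (rule wgraph_imp_simple_graph)
  have w: "\<And>e. e \<in> E \<Longrightarrow> 0 \<le> w e"
    using G unfolding wgraph_def by (auto intro: less_imp_le)
  let ?L = "of_int (Lval V E w) :: rat"
  have "0 \<le> ?L" using Lval_nonneg[OF finite_vertices assms(5)] by simp
  have "hfun V E w (insert x (A \<union> B)) - hfun V E w (A \<union> B)
      \<le> hfun V E w (insert x A) - hfun V E w A"
    using finite_vertices assms(2,3,6) w by (intro hfun_submodular) auto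
  moreover have "of_int (cnum V E (insert x (A \<union> B)) - cnum V E (A \<union> B)) / ?L
      \<le> of_int (cnum V E (insert x A) - cnum V E A + 1) / ?L"
    using cnum_approx_submodular[OF assms(2,3) _ assms(5,6)] assms(4) \<open>0 \<le> ?L\<close>
    unfolding connected_set_def by (intro divide_right_mono) auto
  ultimately show ?thesis
    unfolding ffun_def cfun_eq_cnum by (simp add: diff_divide_distrib add_divide_distrib)
qed

theorem mainTheorem18:
  fixes V :: "'a set" and E :: "'a set set" and w :: "'a set \<Rightarrow> rat"
  assumes "wgraph V E w"
  shows "(\<forall>A B. A \<subseteq> B \<and> B \<subseteq> V \<longrightarrow> ffun V E w A \<le> ffun V E w B)
    \<and> (\<forall>A B x. A \<subseteq> V \<and> B \<subseteq> V \<and> connected_set E B \<and> x \<in> V - B \<longrightarrow>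
         ffun V E w (A \<union> B \<union> {x}) - ffun V E w (A \<union> B)
           \<le> ffun V E w (A \<union> {x}) - ffun V E w A + 1 / of_int (Lval V E w))"
proof (intro conjI allI impI)
  fix A B
  assume "A \<subseteq> B \<and> B \<subseteq> V"
  then show "ffun V E w A \<le> ffun V E w B" using assms by (intro ffun_mono) auto
next
  fix A B x
  assume H: "A \<subseteq> V \<and> B \<subseteq> V \<and> connected_set E B \<and> x \<in> V - B"
  have "0 \<le> Lval V E w"
    using assms H unfolding wgraph_def by (intro Lval_nonneg) auto
  show "ffun V E w (A \<union> B \<union> {x}) - ffun V E w (A \<union> B)
          \<le> ffun V E w (A \<union> {x}) - ffun V E w A + 1 / of_int (Lval V E w)"
  proof (cases "x \<in> A")
    case True
    then have "A \<union> B \<union> {x} = A \<union> B" "A \<union> {x} = A" by auto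
    then show ?thesis using \<open>0 \<le> Lval V E w\<close> by simp
  next
    case False
    then show ?thesis using ffun_approx_submodular[OF assms, of A B x] H by simp
  qed
qed

end
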